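(* Let $N\ge1$, $\lambda,\lambda',\mu,a,b\in\mathbb{K}$ with $\mu\neq0$, $a\ne0$, $b\notin\{-1,-2,\ldots\}$. Then the Lie algebras $\mathfrak{g}^{(1)}(N,\lambda,a,b)_+$ and $\mathfrak{g}^{(3)}(N,\lambda',\mu)_+$ are both isomorphic to the semidirect product $\left(V_{-\frac1N}\oplus\cdots\oplus V_{-\frac{N-1}{N}}\right)\rtimes\mathfrak{g}_{FdB}$ (which is just $\mathfrak{g}_{FdB}$ when $N=1$).
   Context: Base field $\mathbb{K}$ of characteristic zero. On $\mathbb{K}[X]$: $\mathfrak{g}^{(1)}(N,\lambda,a,b)$ has $X^i\bullet X^j=i\lambda X^i$ if $j=0$, $\frac{ai}{j/N+b}X^{i+j}$ if $j\ne0$ and $N\mid j$, $0$ otherwise; $\mathfrak{g}^{(3)}(N,\lambda',\mu)$ has $X^i\bullet X^j=i\lambda' X^i$ if $j=0$, $i\mu X^{i+j}$ if $j\neq0$ and $N\mid j$, $0$ otherwise. For such a preLie product, $\mathfrak{g}_+$ denotes $\mathbb{K}[X]_+=\mathrm{Vect}(X^i,i\ge1)$ with Lie bracket $[P,Q]=P\bullet Q-Q\bullet P$. $\mathfrak{g}_{FdB}$ is the Lie algebra with basis $(e_i)_{i\ge1}$ and $[e_i,e_j]=(i-j)e_{i+j}$. For $\alpha\in\mathbb{K}$, $V_\alpha$ is the right $\mathfrak{g}_{FdB}$-module with basis $(f_i)_{i\ge1}$ and $f_i.e_j=(i+\alpha)f_{i+j}$. For a Lie algebra $\mathfrak{g}$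 and a right $\mathfrak{g}$-module $M$, $M\rtimes\mathfrak{g}$ is $M\oplus\mathfrak{g}$ with $M$ abelian, $[m,x]=m.x$ for $m\in M$, $x\in\mathfrak{g}$, and the bracket of $\mathfrak{g}$ on $\mathfrak{g}$. *)

theory Defs
  imports Main
begin

text \<open>Vectors of a K-vector space with a given basis (indexed by a set I) are
  represented as finitely supported coefficient functions I -> K.\<close>

definition fsupp :: "('i \<Rightarrow> 'k::zero) \<Rightarrow> 'i set" where
  "fsupp x = {i. x i \<noteq> 0}"

definition vec :: "'i set \<Rightarrow> ('i \<Rightarrow> 'k::zero) set" where
  "vec I = {x. finite (fsupp x) \<and> fsupp x \<subseteq> I}"

text \<open>Bilinear extension of a product of basis vectors of the form
  b_i * b'_j = c i j * b''_(m i j).\<close>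

definition bil :: "('a \<Rightarrow> 'b \<Rightarrow> 'k::comm_ring) \<Rightarrow> ('a \<Rightarrow> 'b \<Rightarrow> 'c)
    \<Rightarrow> ('a \<Rightarrow> 'k) \<Rightarrow> ('b \<Rightarrow> 'k) \<Rightarrow> ('c \<Rightarrow> 'k)" where
  "bil c m x y = (\<lambda>k. \<Sum>p\<in>{(i, j). i \<in> fsupp x \<and> j \<in> fsupp y \<and> m i j = k}.
        x (fst p) * y (snd p) * c (fst p) (snd p))"

text \<open>The preLie products on K[X] (coefficient sequences of polynomials):
  X^i \<bullet> X^j = c i j X^(i+j).\<close>

definition preLie1 :: "nat \<Rightarrow> 'k::field_char_0 \<Rightarrow> 'k \<Rightarrow> 'k
    \<Rightarrow> (nat \<Rightarrow> 'k) \<Rightarrow> (nat \<Rightarrow> 'k) \<Rightarrow> (nat \<Rightarrow> 'k)" where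
  "preLie1 N lam a b = bil
     (\<lambda>i j. if j = 0 then of_nat i * lam
            else if N dvd j then a * of_nat i / (of_nat j / of_nat N + b)
            else 0)
     (\<lambda>i j. i + j)"

definition preLie3 :: "nat \<Rightarrow> 'k::field_char_0 \<Rightarrow> 'k
    \<Rightarrow> (nat \<Rightarrow> 'k) \<Rightarrow> (nat \<Rightarrow> 'k) \<Rightarrow> (nat \<Rightarrow> 'k)" where
  "preLie3 N lam' mu = bil
     (\<lambda>i j. if j = 0 then of_nat i * lam'
            else if N dvd j then of_nat i * mu
            else 0)
     (\<lambda>i j. i + j)"

definition commutator :: "('v \<Rightarrow> 'v \<Rightarrow> ('i \<Rightarrow> 'k::ab_group_add))
    \<Rightarrow> 'v \<Rightarrow> 'v \<Rightarrow> ('i \<Rightarrow> 'k)" where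
  "commutator pr x y = (\<lambda>k. pr x y k - pr y x k)"

definition gplus_carrier :: "(nat \<Rightarrow> 'k::zero) set" where
  "gplus_carrier = vec {i. 1 \<le> i}"

definition fdb_carrier :: "(nat \<Rightarrow> 'k::zero) set" where
  "fdb_carrier = vec {i. 1 \<le> i}"

definition fdb_bracket :: "(nat \<Rightarrow> 'k::field_char_0) \<Rightarrow> (nat \<Rightarrow> 'k) \<Rightarrow> (nat \<Rightarrow> 'k)" where
  "fdb_bracket = bil (\<lambda>i j. of_nat i - of_nat j) (\<lambda>i j. i + j)"

definition V_act :: "'k::field_char_0 \<Rightarrow> (nat \<Rightarrow> 'k) \<Rightarrow> (nat \<Rightarrow> 'k) \<Rightarrow> (nat \<Rightarrow> 'k)" where
  "V_act alpha = bil (\<lambda>i j. of_nat i + alpha) (\<lambda>i j. i + j)"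

text \<open>Direct sum V_{-1/N} + ... + V_{-(N-1)/N}; component r lives on indices (r, i).\<close>

definition M_carrier :: "nat \<Rightarrow> (nat \<times> nat \<Rightarrow> 'k::zero) set" where
  "M_carrier N = vec ({1..N-1} \<times> {i. 1 \<le> i})"

definition M_act :: "nat \<Rightarrow> (nat \<times> nat \<Rightarrow> 'k::field_char_0) \<Rightarrow> (nat \<Rightarrow> 'k) \<Rightarrow> (nat \<times> nat \<Rightarrow> 'k)" where
  "M_act N x y = (\<lambda>ri. case ri of (r, i) \<Rightarrow> V_act (- (of_nat r / of_nat N)) (\<lambda>l. x (r, l)) y i)"

text \<open>Semidirect product M \<rtimes> g, elements are coefficient functions on the disjoint
  union of the index sets: [m + x, m' + x'] = m.x' - m'.x + [x, x'].\<close>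

definition sd_carrier :: "'a set \<Rightarrow> 'b set \<Rightarrow> ('a + 'b \<Rightarrow> 'k::zero) set" where
  "sd_carrier MI GI = {z. (z \<circ> Inl) \<in> vec MI \<and> (z \<circ> Inr) \<in> vec GI}"

definition sd_bracket :: "(('a \<Rightarrow> 'k::ab_group_add) \<Rightarrow> ('b \<Rightarrow> 'k) \<Rightarrow> ('a \<Rightarrow> 'k))
    \<Rightarrow> (('b \<Rightarrow> 'k) \<Rightarrow> ('b \<Rightarrow> 'k) \<Rightarrow> ('b \<Rightarrow> 'k))
    \<Rightarrow> ('a + 'b \<Rightarrow> 'k) \<Rightarrow> ('a + 'b \<Rightarrow> 'k) \<Rightarrow> ('a + 'b \<Rightarrow> 'k)" where
  "sd_bracket act br z z' = (\<lambda>k. case k of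
       Inl u \<Rightarrow> act (z \<circ> Inl) (z' \<circ> Inr) u - act (z' \<circ> Inl) (z \<circ> Inr) u
     | Inr v \<Rightarrow> br (z \<circ> Inr) (z' \<circ> Inr) v)"

definition target_carrier :: "nat \<Rightarrow> ((nat \<times> nat) + nat \<Rightarrow> 'k::zero) set" where
  "target_carrier N = sd_carrier ({1..N-1} \<times> {i. 1 \<le> i}) {i. 1 \<le> i}"

definition target_bracket :: "nat \<Rightarrow> ((nat \<times> nat) + nat \<Rightarrow> 'k::field_char_0)
    \<Rightarrow> ((nat \<times> nat) + nat \<Rightarrow> 'k) \<Rightarrow> ((nat \<times> nat) + nat \<Rightarrow> 'k)" where
  "target_bracket N = sd_bracket (M_act N) fdb_bracket"

definition lie_iso :: "('i \<Rightarrow> 'k::field) set \<Rightarrow> (('i \<Rightarrow> 'k) \<Rightarrow> ('i \<Rightarrow> 'k) \<Rightarrow> ('i \<Rightarrow> 'k))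
    \<Rightarrow> ('j \<Rightarrow> 'k) set \<Rightarrow> (('j \<Rightarrow> 'k) \<Rightarrow> ('j \<Rightarrow> 'k) \<Rightarrow> ('j \<Rightarrow> 'k))
    \<Rightarrow> (('i \<Rightarrow> 'k) \<Rightarrow> ('j \<Rightarrow> 'k)) \<Rightarrow> bool" where
  "lie_iso A brA B brB phi \<longleftrightarrow>
     bij_betw phi A B \<and>
     (\<forall>x\<in>A. \<forall>y\<in>A. phi (\<lambda>i. x i + y i) = (\<lambda>j. phi x j + phi y j)) \<and>
     (\<forall>c. \<forall>x\<in>A. phi (\<lambda>i. c * x i) = (\<lambda>j. c * phi x j)) \<and>
     (\<forall>x\<in>A. \<forall>y\<in>A. phi (brA x y) = brB (phi x) (phi y))"

definition lie_isomorphic :: "('i \<Rightarrow> 'k::field) set \<Rightarrow> (('i \<Rightarrow> 'k) \<Rightarrow> ('i \<Rightarrow> 'k) \<Rightarrow> ('i \<Rightarrow> 'k))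
    \<Rightarrow> ('j \<Rightarrow> 'k) set \<Rightarrow> (('j \<Rightarrow> 'k) \<Rightarrow> ('j \<Rightarrow> 'k) \<Rightarrow> ('j \<Rightarrow> 'k)) \<Rightarrow> bool" where
  "lie_isomorphic A brA B brB \<longleftrightarrow> (\<exists>phi. lie_iso A brA B brB phi)"

end

theory Submission
  imports Defs
begin

text \<open>On g_+ only the products X^i \<bullet> X^j with j \<ge> 1 matter, and in both algebras they read
  X^i \<bullet> X^j = [N dvd j] i g(j/N) X^(i+j), with g(q) = a/(q+b) resp. g(q) = mu, nonzero for
  q \<ge> 1 and satisfying (q g(q') - q' g(q)) g(q+q') = (q - q') g(q) g(q').
  Send X^(Nq) to N g(q) e_q and X^(Ni-r), 0 < r < N, to the basis vector f_i of V_(-r/N).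
  The identity for g turns [X^(Nq), X^(Nq')] into (q - q') e_(q+q'); the commutator
  [X^(Ni-r), X^(Nq)] is (Ni - r) g(q) X^(N(i+q)-r), matching f_i . e_q = (i - r/N) f_(i+q);
  and two exponents prime to N multiply to zero, as the module is abelian.\<close>

lemma sum_atMost_rev: "(\<Sum>i\<le>n. f (n - i)) = (\<Sum>i\<le>(n::nat). f i)"
  using sum.atLeastAtMost_rev[of f 0 n] by (simp add: atLeast0AtMost)

lemma sum_atMost_multiples:
  fixes W :: "nat \<Rightarrow> 'a::comm_monoid_add"
  assumes "N > 0"
  shows "(\<Sum>i\<le>n. if N dvd i then W i else 0) = (\<Sum>q\<le>n div N. W (N * q))"
proof -
  have "{i\<in>{..n}. N dvd i} = (\<lambda>q. N * q) ` {..n div N}"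
  proof (intro set_eqI iffI)
    fix i assume "i \<in> {i\<in>{..n}. N dvd i}"
    then show "i \<in> (\<lambda>q. N * q) ` {..n div N}"
      by (auto intro!: image_eqI[of _ _ "i div N"] div_le_mono)
  next
    fix i assume "i \<in> (\<lambda>q. N * q) ` {..n div N}"
    then show "i \<in> {i\<in>{..n}. N dvd i}"
      using assms by (auto simp: less_eq_div_iff_mult_less_eq mult.commute)
  qed
  then have "(\<Sum>i\<le>n. if N dvd i then W i else 0) = (\<Sum>i\<in>(\<lambda>q. N * q) ` {..n div N}. W i)"
    by (simp add: sum.inter_filter[symmetric])
  also have "\<dots> = (\<Sum>q\<le>n div N. W (N * q))"
    using assms by (simp add: sum.reindex inj_on_def)
  finally show ?thesis .
qed

lemma mult_minus_div_mod:
  assumes "1 \<le> r" "r < (N::nat)" "1 \<le> i"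
  shows "(N * i - r) div N = i - 1" "(N * i - r) mod N = N - r"
proof -
  have e: "N * i - r = (N - r) + N * (i - 1)" using assms by (cases i) (auto simp: algebra_simps)
  have "N - r < N" "N \<noteq> 0" using assms by auto
  then show "(N * i - r) div N = i - 1" "(N * i - r) mod N = N - r"
    unfolding e by (simp_all only: div_mult_self2 mod_mult_self2 div_less mod_less) simp
qed

lemma nonmultiple_as_mult_minus:
  assumes "(N::nat) > 0" "\<not> N dvd n"
  shows "1 \<le> N - n mod N" "N - n mod N \<le> N - 1" "N * (n div N + 1) - (N - n mod N) = n"
proof -
  have "n mod N < N" "n mod N \<noteq> 0" using assms by (simp_all add: dvd_eq_mod_eq_0)
  moreover have "N * (n div N) + n mod N = n" by (rule mult_div_mod_eq)
  ultimately show "1 \<le> N - n mod N" "N - n mod N \<le> N - 1" "N * (n div N + 1) - (N - n mod N) = n"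
    by (auto simp: algebra_simps)
qed

lemma bil_add_conv:
  fixes x y :: "nat \<Rightarrow> 'k::comm_ring"
  assumes "finite (fsupp x)" and "finite (fsupp y)"
  shows "bil c (\<lambda>i j. i + j) x y n = (\<Sum>i\<le>n. x i * y (n - i) * c i (n - i))"
proof -
  let ?P = "{(i, j). i \<in> fsupp x \<and> j \<in> fsupp y \<and> i + j = n}"
  let ?Q = "{i\<in>{..n}. x i \<noteq> 0 \<and> y (n - i) \<noteq> 0}"
  have P: "?P = (\<lambda>i. (i, n - i)) ` ?Q"
    by (auto simp: fsupp_def image_iff)
  have "bil c (\<lambda>i j. i + j) x y n = (\<Sum>p\<in>?P. x (fst p) * y (snd p) * c (fst p) (snd p))"
    by (simp add: bil_def)
  also have "\<dots> = (\<Sum>i\<in>?Q. x i * y (n - i) * c i (n - i))"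
    unfolding P by (subst sum.reindex) (auto simp: inj_on_def)
  also have "\<dots> = (\<Sum>i\<le>n. x i * y (n - i) * c i (n - i))"
    by (rule sum.mono_neutral_left) auto
  finally show ?thesis .
qed

lemma commutator_bil_add_conv:
  fixes x y :: "nat \<Rightarrow> 'k::comm_ring"
  assumes fx: "finite (fsupp x)" and fy: "finite (fsupp y)"
  shows "commutator (bil c (\<lambda>i j. i + j)) x y n =
    (\<Sum>i\<le>n. x i * y (n - i) * (c i (n - i) - c (n - i) i))"
proof -
  have "bil c (\<lambda>i j. i + j) y x n = (\<Sum>i\<le>n. y (n - i) * x (n - (n - i)) * c (n - i) (n - (n - i)))"
    unfolding bil_add_conv[OF fy fx] by (rule sum_atMost_rev[symmetric])
  also have "\<dots> = (\<Sum>i\<le>n. x i * y (n - i) * c (n - i) i)"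
    by (rule sum.cong) (auto simp: algebra_simps)
  finally show ?thesis
    by (simp add: commutator_def bil_add_conv[OF fx fy] sum_subtractf[symmetric] algebra_simps)
qed

lemma gplus_carrier_iff: "x \<in> gplus_carrier \<longleftrightarrow> finite (fsupp x) \<and> x 0 = 0"
  unfolding gplus_carrier_def vec_def fsupp_def by (auto simp: Suc_le_eq) (metis not_gr0)

lemma finite_fsupp_Pair: "finite (fsupp f) \<Longrightarrow> finite (fsupp (\<lambda>l. f (r, l)))"
proof -
  assume "finite (fsupp f)"
  then have "finite (Pair r -` fsupp f)" by (rule finite_vimageI) (simp add: inj_on_def)
  moreover have "fsupp (\<lambda>l. f (r, l)) = Pair r -` fsupp f" by (auto simp: fsupp_def)
  ultimately show ?thesis by simp
qed

lemma target_carrier_iff: "z \<in> target_carrier N \<longleftrightarrow>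
   finite (fsupp (z \<circ> Inl)) \<and> finite (fsupp (z \<circ> Inr)) \<and> z (Inr 0) = 0 \<and>
   (\<forall>r i. \<not> (1 \<le> r \<and> r \<le> N - 1 \<and> 1 \<le> i) \<longrightarrow> z (Inl (r, i)) = 0)"
  unfolding target_carrier_def sd_carrier_def vec_def fsupp_def
  by (auto simp: subset_iff) (metis not_gr0 One_nat_def Suc_leI)+

lemma target_bracket_Inr:
  assumes "finite (fsupp (z \<circ> Inr))" "finite (fsupp (z' \<circ> Inr))"
  shows "target_bracket N z z' (Inr p) =
    (\<Sum>q\<le>p. z (Inr q) * z' (Inr (p - q)) * (of_nat q - of_nat (p - q)))"
  unfolding target_bracket_def sd_bracket_def fdb_bracket_def
  using bil_add_conv[OF assms, of "\<lambda>i j. of_nat i - of_nat j" p] by simp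

lemma target_bracket_Inl:
  assumes "finite (fsupp (z \<circ> Inl))" "finite (fsupp (z' \<circ> Inl))"
    "finite (fsupp (z \<circ> Inr))" "finite (fsupp (z' \<circ> Inr))"
  shows "target_bracket N z z' (Inl (r, k)) =
    (\<Sum>i\<le>k. (z (Inl (r, i)) * z' (Inr (k - i)) - z' (Inl (r, i)) * z (Inr (k - i)))
              * (of_nat i - of_nat r / of_nat N))"
proof -
  have "finite (fsupp (\<lambda>l. z (Inl (r, l))))" "finite (fsupp (\<lambda>l. z' (Inl (r, l))))"
    using finite_fsupp_Pair[OF assms(1), of r] finite_fsupp_Pair[OF assms(2), of r]
    by (simp_all add: comp_def)
  from bil_add_conv[OF this(1) assms(4)] bil_add_conv[OF this(2) assms(3)]
  show ?thesis
    by (simp add: target_bracket_def sd_bracket_def M_act_def V_act_def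
        sum_subtractf[symmetric] algebra_simps)
qed

lemma commutator_bil_formula:
  fixes g :: "nat \<Rightarrow> 'k::comm_ring_1"
  assumes N: "N > 0"
    and c_pos: "\<And>i j. j \<ge> 1 \<Longrightarrow> c i j = (if N dvd j then of_nat i * g (j div N) else 0)"
    and "x \<in> gplus_carrier" "y \<in> gplus_carrier"
  shows "commutator (bil c (\<lambda>i j. i + j)) x y n =
    (\<Sum>q\<le>n div N. of_nat (n - N * q) * g q * (x (n - N * q) * y (N * q) - x (N * q) * y (n - N * q)))"
proof -
  from assms have fx: "finite (fsupp x)" "x 0 = 0" and fy: "finite (fsupp y)" "y 0 = 0"
    by (auto simp: gplus_carrier_iff)
  define L where "L i = (if N dvd i then of_nat (n - i) * g (i div N) * x (n - i) * y i else 0)" for i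
  define R where "R i = (if N dvd i then of_nat (n - i) * g (i div N) * x i * y (n - i) else 0)" for i
  have "x i * y (n - i) * (c i (n - i) - c (n - i) i) = L (n - i) - R i" if "i \<le> n" for i
    using c_pos[of "n - i" i] c_pos[of i "n - i"] fx(2) fy(2) that
    by (cases "i = 0"; cases "n - i = 0") (auto simp: L_def R_def algebra_simps)
  then have "commutator (bil c (\<lambda>i j. i + j)) x y n = (\<Sum>i\<le>n. L (n - i)) - (\<Sum>i\<le>n. R i)"
    by (simp add: commutator_bil_add_conv[OF fx(1) fy(1)] sum_subtractf[symmetric])
  also have "\<dots> = (\<Sum>i\<le>n. if N dvd i then
      of_nat (n - i) * g (i div N) * (x (n - i) * y i - x i * y (n - i)) else 0)"
    unfolding sum_atMost_rev[of L n] sum_subtractf[symmetric]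
    by (rule sum.cong) (simp_all add: L_def R_def algebra_simps)
  also have "\<dots> = (\<Sum>q\<le>n div N. of_nat (n - N * q) * g q * (x (n - N * q) * y (N * q) - x (N * q) * y (n - N * q)))"
    using N by (simp add: sum_atMost_multiples)
  finally show ?thesis .
qed

definition to_target :: "nat \<Rightarrow> (nat \<Rightarrow> 'k) \<Rightarrow> (nat \<Rightarrow> 'k::field_char_0)
    \<Rightarrow> ((nat \<times> nat) + nat \<Rightarrow> 'k)" where
  "to_target N g x = (\<lambda>t. case t of
       Inr q \<Rightarrow> x (N * q) * (of_nat N * g q)
     | Inl (r, i) \<Rightarrow> if 1 \<le> r \<and> r \<le> N - 1 \<and> 1 \<le> i then x (N * i - r) else 0)"

definition of_target :: "nat \<Rightarrow> (nat \<Rightarrow> 'k) \<Rightarrow> ((nat \<times> nat) + nat \<Rightarrow> 'k::field_char_0)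
    \<Rightarrow> (nat \<Rightarrow> 'k)" where
  "of_target N g z = (\<lambda>n. if N dvd n then z (Inr (n div N)) / (of_nat N * g (n div N))
      else z (Inl (N - n mod N, n div N + 1)))"

lemma to_target_add: "to_target N g (\<lambda>i. x i + y i) = (\<lambda>t. to_target N g x t + to_target N g y t)"
  by (auto simp: to_target_def algebra_simps split: sum.splits prod.splits)

lemma to_target_smult: "to_target N g (\<lambda>i. c * x i) = (\<lambda>t. c * to_target N g x t)"
  by (auto simp: to_target_def algebra_simps split: sum.splits prod.splits)

context
  fixes N :: nat and g :: "nat \<Rightarrow> 'k::field_char_0"
  assumes N: "N \<ge> 1" and g_nonzero: "\<And>q. q \<ge> 1 \<Longrightarrow> g q \<noteq> 0"
begin

lemma to_target_in_target_carrier: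
  assumes "x \<in> gplus_carrier" shows "to_target N g x \<in> target_carrier N"
proof -
  from assms have fx: "finite (fsupp x)" and x0: "x 0 = 0" by (auto simp: gplus_carrier_iff)
  have "fsupp (to_target N g x \<circ> Inr) \<subseteq> (\<lambda>n. n div N) ` fsupp x"
  proof
    fix q assume "q \<in> fsupp (to_target N g x \<circ> Inr)"
    then have "N * q \<in> fsupp x" by (auto simp: fsupp_def to_target_def)
    then show "q \<in> (\<lambda>n. n div N) ` fsupp x" using N by (auto intro!: image_eqI[where x="N * q"])
  qed
  then have fin_Inr: "finite (fsupp (to_target N g x \<circ> Inr))" using fx finite_surj by blast
  have "fsupp (to_target N g x \<circ> Inl) \<subseteq> (\<lambda>n. (N - n mod N, n div N + 1)) ` fsupp x"
  proof
    fix ri assume ri: "ri \<in> fsupp (to_target N g x \<circ> Inl)"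
    obtain r i where ri_eq: "ri = (r, i)" by force
    from ri have "1 \<le> r" "r < N" "1 \<le> i" and "x (N * i - r) \<noteq> 0"
      using N by (auto simp: fsupp_def to_target_def ri_eq split: if_splits)
    then show "ri \<in> (\<lambda>n. (N - n mod N, n div N + 1)) ` fsupp x"
      by (auto simp: fsupp_def ri_eq mult_minus_div_mod intro!: image_eqI[where x="N * i - r"])
  qed
  then have fin_Inl: "finite (fsupp (to_target N g x \<circ> Inl))" using fx finite_surj by blast
  show ?thesis using fin_Inr fin_Inl x0 by (auto simp: target_carrier_iff to_target_def)
qed

lemma of_target_in_gplus_carrier:
  assumes "z \<in> target_carrier N" shows "of_target N g z \<in> gplus_carrier"
proof -
  from assms have fin_Inl: "finite (fsupp (z \<circ> Inl))" and fin_Inr: "finite (fsupp (z \<circ> Inr))"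
    and z0: "z (Inr 0) = 0" by (auto simp: target_carrier_iff)
  have "fsupp (of_target N g z) \<subseteq>
      (\<lambda>q. N * q) ` fsupp (z \<circ> Inr) \<union> (\<lambda>(r, i). N * i - r) ` fsupp (z \<circ> Inl)"
  proof
    fix n assume n: "n \<in> fsupp (of_target N g z)"
    show "n \<in> (\<lambda>q. N * q) ` fsupp (z \<circ> Inr) \<union> (\<lambda>(r, i). N * i - r) ` fsupp (z \<circ> Inl)"
    proof (cases "N dvd n")
      case True
      then have "n div N \<in> fsupp (z \<circ> Inr)" using n by (auto simp: fsupp_def of_target_def)
      with True show ?thesis by (auto intro!: image_eqI[where x="n div N"])
    next
      case False
      then have "(N - n mod N, n div N + 1) \<in> fsupp (z \<circ> Inl)"
        using n by (auto simp: fsupp_def of_target_def)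
      with nonmultiple_as_mult_minus[OF _ False] N show ?thesis
        by (auto intro!: image_eqI[where x="(N - n mod N, n div N + 1)"])
    qed
  qed
  then have "finite (fsupp (of_target N g z))"
    using fin_Inl fin_Inr by (meson finite_UnI finite_imageI finite_subset)
  moreover have "of_target N g z 0 = 0" using z0 by (simp add: of_target_def)
  ultimately show ?thesis by (simp add: gplus_carrier_iff)
qed

lemma of_target_to_target:
  assumes "x \<in> gplus_carrier" shows "of_target N g (to_target N g x) = x"
proof
  fix n
  from assms have x0: "x 0 = 0" by (simp add: gplus_carrier_iff)
  show "of_target N g (to_target N g x) n = x n"
  proof (cases "N dvd n")
    case True
    then obtain q where "n = N * q" by blast
    then show ?thesis using x0 N g_nonzero[of q] by (cases "q = 0") (auto simp: of_target_def to_target_def)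
  next
    case False
    with nonmultiple_as_mult_minus[OF _ False] N show ?thesis by (simp add: of_target_def to_target_def)
  qed
qed

lemma to_target_of_target:
  assumes "z \<in> target_carrier N" shows "to_target N g (of_target N g z) = z"
proof
  fix t
  from assms have z0: "z (Inr 0) = 0"
    and z_Inl: "\<And>r i. \<not> (1 \<le> r \<and> r \<le> N - 1 \<and> 1 \<le> i) \<Longrightarrow> z (Inl (r, i)) = 0"
    by (auto simp: target_carrier_iff)
  show "to_target N g (of_target N g z) t = z t"
  proof (cases t)
    case (Inr q)
    then show ?thesis using z0 N g_nonzero[of q] by (cases "q = 0") (auto simp: of_target_def to_target_def)
  next
    case (Inl ri)
    obtain r i where ri: "ri = (r, i)" by force
    show ?thesis
    proof (cases "1 \<le> r \<and> r \<le> N - 1 \<and> 1 \<le> i")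
      case True
      then have "r < N" using N by linarith
      with True have "\<not> N dvd (N * i - r)" "(N * i - r) div N = i - 1" "(N * i - r) mod N = N - r"
        by (simp_all add: mult_minus_div_mod dvd_eq_mod_eq_0)
      with True \<open>r < N\<close> show ?thesis by (simp add: Inl ri of_target_def to_target_def)
    next
      case False
      then show ?thesis using z_Inl by (auto simp: Inl ri to_target_def)
    qed
  qed
qed

lemma bij_betw_to_target: "bij_betw (to_target N g) gplus_carrier (target_carrier N)"
  by (rule bij_betw_byWitness[where f'="of_target N g"])
     (auto simp: of_target_to_target to_target_of_target
       to_target_in_target_carrier of_target_in_gplus_carrier)

lemma to_target_module_term:
  assumes r: "1 \<le> r" "r \<le> N - 1" and q: "q < k"
  shows "(to_target N g x (Inl (r, k - q)) * to_target N g y (Inr q)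
        - to_target N g y (Inl (r, k - q)) * to_target N g x (Inr q)) * (of_nat (k - q) - of_nat r / of_nat N)
    = of_nat (N * k - r - N * q) * g q
        * (x (N * k - r - N * q) * y (N * q) - x (N * q) * y (N * k - r - N * q))"
proof -
  from q have "N * (q + 1) \<le> N * k" by (intro mult_le_mono2) linarith
  then have "N * q + N \<le> N * k" by simp
  moreover have "N * (k - q) = N * k - N * q" by (simp add: diff_mult_distrib2)
  ultimately have m: "N * k - r - N * q = N * (k - q) - r" "r \<le> N * (k - q)"
    using r by simp_all
  define w where "w = of_nat (k - q) - of_nat r / (of_nat N :: 'k)"
  have weight: "of_nat (N * k - r - N * q) = of_nat N * w"
    using m r N by (simp add: w_def of_nat_diff field_simps)
  have "(to_target N g x (Inl (r, k - q)) * to_target N g y (Inr q)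
        - to_target N g y (Inl (r, k - q)) * to_target N g x (Inr q)) * (of_nat (k - q) - of_nat r / of_nat N)
      = (x (N * k - r - N * q) * (y (N * q) * (of_nat N * g q))
        - y (N * k - r - N * q) * (x (N * q) * (of_nat N * g q))) * w"
    using r q m(1) by (simp add: to_target_def w_def Suc_le_eq)
  then show ?thesis unfolding weight by (simp add: algebra_simps)
qed

context
  fixes c :: "nat \<Rightarrow> nat \<Rightarrow> 'k"
  assumes c_pos: "\<And>i j. j \<ge> 1 \<Longrightarrow> c i j = (if N dvd j then of_nat i * g (j div N) else 0)"
    and g_cocycle: "\<And>q q'. q \<ge> 1 \<Longrightarrow> q' \<ge> 1 \<Longrightarrow>
      (of_nat q * g q' - of_nat q' * g q) * g (q + q') = (of_nat q - of_nat q') * g q * g q'"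
begin

lemma to_target_fdb_term:
  assumes "x 0 = 0" and "y 0 = 0" and "q \<le> p"
  shows "of_nat N * (of_nat q * g (p - q) - of_nat (p - q) * g q) * x (N * q) * y (N * (p - q))
      * (of_nat N * g p)
    = to_target N g x (Inr q) * to_target N g y (Inr (p - q)) * (of_nat q - of_nat (p - q))"
proof -
  consider "q = 0" | "q = p" | "q \<ge> 1" "p - q \<ge> 1" using assms(3) by linarith
  then show ?thesis
  proof cases
    case 3
    with g_cocycle[of q "p - q"] assms(3) have cocycle: "(of_nat q * g (p - q) - of_nat (p - q) * g q) * g p
        = (of_nat q - of_nat (p - q)) * g q * g (p - q)" by simp
    have "of_nat N * (of_nat q * g (p - q) - of_nat (p - q) * g q) * x (N * q) * y (N * (p - q))
        * (of_nat N * g p) = of_nat N * of_nat N * x (N * q) * y (N * (p - q))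
        * ((of_nat q * g (p - q) - of_nat (p - q) * g q) * g p)"
      by (simp only: mult_ac)
    then show ?thesis unfolding cocycle by (simp add: to_target_def mult_ac)
  qed (use assms in \<open>auto simp: to_target_def\<close>)
qed

lemma to_target_commutator_Inr:
  assumes x: "x \<in> gplus_carrier" and y: "y \<in> gplus_carrier"
  shows "to_target N g (commutator (bil c (\<lambda>i j. i + j)) x y) (Inr p) =
         target_bracket N (to_target N g x) (to_target N g y) (Inr p)"
proof -
  from x y have x0: "x 0 = 0" and y0: "y 0 = 0" by (simp_all add: gplus_carrier_iff)
  define F where "F q = of_nat N * of_nat (p - q) * g q * x (N * (p - q)) * y (N * q)" for q
  define G where "G q = of_nat N * of_nat (p - q) * g q * x (N * q) * y (N * (p - q))" for q
  have "commutator (bil c (\<lambda>i j. i + j)) x y (N * p) = (\<Sum>q\<le>p. F q - G q)"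
    using N by (simp add: commutator_bil_formula[OF _ c_pos x y] F_def G_def
        diff_mult_distrib2[symmetric] algebra_simps)
  also have "\<dots> = (\<Sum>q\<le>p. F (p - q) - G q)"
    by (simp only: sum_subtractf sum_atMost_rev[of F p])
  also have "\<dots> = (\<Sum>q\<le>p. of_nat N * (of_nat q * g (p - q) - of_nat (p - q) * g q)
      * x (N * q) * y (N * (p - q)))"
    by (rule sum.cong) (simp_all add: F_def G_def algebra_simps)
  finally have "to_target N g (commutator (bil c (\<lambda>i j. i + j)) x y) (Inr p) =
      (\<Sum>q\<le>p. of_nat N * (of_nat q * g (p - q) - of_nat (p - q) * g q)
        * x (N * q) * y (N * (p - q)) * (of_nat N * g p))"
    by (simp add: to_target_def sum_distrib_right)
  also have "\<dots> = (\<Sum>q\<le>p. to_target N g x (Inr q) * to_target N g y (Inr (p - q))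
      * (of_nat q - of_nat (p - q)))"
    by (intro sum.cong refl to_target_fdb_term[of x y, OF x0 y0]) simp
  also have "\<dots> = target_bracket N (to_target N g x) (to_target N g y) (Inr p)"
    using to_target_in_target_carrier[OF x] to_target_in_target_carrier[OF y]
    by (simp add: target_carrier_iff target_bracket_Inr)
  finally show ?thesis .
qed

lemma to_target_commutator_Inl:
  assumes x: "x \<in> gplus_carrier" and y: "y \<in> gplus_carrier"
  shows "to_target N g (commutator (bil c (\<lambda>i j. i + j)) x y) (Inl (r, k)) =
         target_bracket N (to_target N g x) (to_target N g y) (Inl (r, k))"
proof -
  from x y have x0: "x 0 = 0" and y0: "y 0 = 0" by (simp_all add: gplus_carrier_iff)
  define H where "H i = (to_target N g x (Inl (r, i)) * to_target N g y (Inr (k - i))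
      - to_target N g y (Inl (r, i)) * to_target N g x (Inr (k - i))) * (of_nat i - of_nat r / of_nat N)"
    for i
  have bracket: "target_bracket N (to_target N g x) (to_target N g y) (Inl (r, k)) = (\<Sum>i\<le>k. H i)"
    using to_target_in_target_carrier[OF x] to_target_in_target_carrier[OF y]
    by (simp add: target_carrier_iff target_bracket_Inl H_def)
  show ?thesis
  proof (cases "1 \<le> r \<and> r \<le> N - 1 \<and> 1 \<le> k")
    case False
    then have "H i = 0" for i using x0 y0 by (auto simp: H_def to_target_def)
    moreover have "to_target N g (commutator (bil c (\<lambda>i j. i + j)) x y) (Inl (r, k)) = 0"
      unfolding to_target_def sum.case prod.case if_not_P[OF False] by (rule refl)
    ultimately show ?thesis using bracket by simp
  next
    case True
    then have r: "1 \<le> r" "r \<le> N - 1" and k: "1 \<le> k" by auto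
    have "(N * k - r) div N = k - 1" using mult_minus_div_mod[of r N k] r k N by simp
    then have "to_target N g (commutator (bil c (\<lambda>i j. i + j)) x y) (Inl (r, k)) =
        (\<Sum>q\<le>k - 1. of_nat (N * k - r - N * q) * g q
          * (x (N * k - r - N * q) * y (N * q) - x (N * q) * y (N * k - r - N * q)))"
      using True N by (simp add: to_target_def commutator_bil_formula[OF _ c_pos x y])
    also have "\<dots> = (\<Sum>q\<le>k - 1. H (k - q))"
    proof (rule sum.cong)
      fix q assume "q \<in> {..k - 1}"
      with k have "q < k" by auto
      then show "of_nat (N * k - r - N * q) * g q
          * (x (N * k - r - N * q) * y (N * q) - x (N * q) * y (N * k - r - N * q)) = H (k - q)"
        using to_target_module_term[OF r, of q k x y] by (simp add: H_def)
    qed simp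
    also have "\<dots> = (\<Sum>q\<le>k. H (k - q))"
      using k by (cases k) (simp_all add: H_def to_target_def)
    also have "\<dots> = target_bracket N (to_target N g x) (to_target N g y) (Inl (r, k))"
      unfolding bracket by (rule sum_atMost_rev)
    finally show ?thesis .
  qed
qed

lemma lie_isomorphic_gplus_target:
  "lie_isomorphic gplus_carrier (commutator (bil c (\<lambda>i j. i + j))) (target_carrier N) (target_bracket N)"
proof -
  have "to_target N g (commutator (bil c (\<lambda>i j. i + j)) x y) =
      target_bracket N (to_target N g x) (to_target N g y)"
    if "x \<in> gplus_carrier" "y \<in> gplus_carrier" for x y
  proof
    fix t show "to_target N g (commutator (bil c (\<lambda>i j. i + j)) x y) t =
        target_bracket N (to_target N g x) (to_target N g y) t"
    proof (cases t)
      case (Inl rk)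
      then show ?thesis by (cases rk) (simp add: to_target_commutator_Inl[OF that])
    next
      case (Inr p)
      then show ?thesis by (simp add: to_target_commutator_Inr[OF that])
    qed
  qed
  then show ?thesis
    unfolding lie_isomorphic_def lie_iso_def
    by (intro exI[of _ "to_target N g"]) (simp add: bij_betw_to_target to_target_add to_target_smult)
qed

end

end

lemma shifted_reciprocal_cocycle:
  fixes X Y a b :: "'k::field"
  assumes "X + b \<noteq> 0" and "Y + b \<noteq> 0" and "X + Y + b \<noteq> 0"
  shows "(X * (a / (Y + b)) - Y * (a / (X + b))) * (a / (X + Y + b))
    = (X - Y) * (a / (X + b)) * (a / (Y + b))"
proof -
  have "X * (a / (Y + b)) - Y * (a / (X + b)) = a * (X - Y) * (X + Y + b) / ((X + b) * (Y + b))"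
    using assms by (simp add: field_simps)
  also have "\<dots> * (a / (X + Y + b)) = (a * (X - Y) * a) * (X + Y + b) / (((X + b) * (Y + b)) * (X + Y + b))"
    by (simp only: times_divide_times_eq mult_ac)
  also have "\<dots> = (a * (X - Y) * a) / ((X + b) * (Y + b))"
    using assms(3) by (rule nonzero_mult_divide_mult_cancel_right)
  also have "\<dots> = (X - Y) * (a / (X + b)) * (a / (Y + b))"
    by (simp add: field_simps)
  finally show ?thesis .
qed

lemma preLie1_lie_isomorphic:
  fixes lam a b :: "'k::field_char_0"
  assumes N: "N \<ge> 1" and "a \<noteq> 0" and b: "\<forall>n::nat. n \<ge> 1 \<longrightarrow> b \<noteq> - of_nat n"
  shows "lie_isomorphic gplus_carrier (commutator (preLie1 N lam a b)) (target_carrier N) (target_bracket N)"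
  unfolding preLie1_def
proof (rule lie_isomorphic_gplus_target[where g="\<lambda>q. a / (of_nat q + b)"])
  have b_shift: "of_nat q + b \<noteq> 0" if "q \<ge> 1" for q
    using b that by (auto simp: add_eq_0_iff)
  show "N \<ge> 1" by (rule N)
  show "a / (of_nat q + b) \<noteq> 0" if "q \<ge> 1" for q using b_shift[OF that] \<open>a \<noteq> 0\<close> by simp
  show "(if j = 0 then of_nat i * lam
      else if N dvd j then a * of_nat i / (of_nat j / of_nat N + b) else 0)
    = (if N dvd j then of_nat i * (a / (of_nat (j div N) + b)) else 0)" if "j \<ge> 1" for i j
    using that N by (auto elim!: dvdE)
  show "(of_nat q * (a / (of_nat q' + b)) - of_nat q' * (a / (of_nat q + b))) * (a / (of_nat (q + q') + b))
      = (of_nat q - of_nat q') * (a / (of_nat q + b)) * (a / (of_nat q' + b))"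
    if "q \<ge> 1" "q' \<ge> 1" for q q'
    using shifted_reciprocal_cocycle[OF b_shift b_shift, of q q' a] b_shift[of "q + q'"] that
    by (simp add: add.assoc)
qed

lemma preLie3_lie_isomorphic:
  fixes lam' mu :: "'k::field_char_0"
  assumes "N \<ge> 1" and "mu \<noteq> 0"
  shows "lie_isomorphic gplus_carrier (commutator (preLie3 N lam' mu)) (target_carrier N) (target_bracket N)"
  unfolding preLie3_def
  by (rule lie_isomorphic_gplus_target[where g="\<lambda>q. mu"]) (use assms in \<open>auto simp: algebra_simps\<close>)

theorem mainTheorem15:
  fixes N :: nat and lam lam' mu a b :: "'k::field_char_0"
  assumes "N \<ge> 1" and "mu \<noteq> 0" and "a \<noteq> 0"
    and "\<forall>n::nat. n \<ge> 1 \<longrightarrow> b \<noteq> - of_nat n"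
  shows "lie_isomorphic (gplus_carrier :: (nat \<Rightarrow> 'k) set) (commutator (preLie1 N lam a b))
           (target_carrier N) (target_bracket N)
       \<and> lie_isomorphic (gplus_carrier :: (nat \<Rightarrow> 'k) set) (commutator (preLie3 N lam' mu))
           (target_carrier N) (target_bracket N)"
  using preLie1_lie_isomorphic[OF assms(1,3,4)] preLie3_lie_isomorphic[OF assms(1,2)] by blast

end
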